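(* Let $\widehat{\mathbf{H}}_u,\mathbf{L}_1\in\mathbb{R}^{N_s\times N_b}$, $\lambda>0$, $\gamma_u\ge0$, $\beta_u\in\mathbb{R}$, $\mu_0>0$, $\rho>1$, $\mu_{\max}\ge\mu_0$. Let $f(\mathbf{L})=\|\mathbf{L}\|_*+\gamma_u\|\mathbf{L}-\beta_u\mathbf{L}_1\|_F^2$ and $g(\mathbf{S})=\lambda\|\mathbf{S}\|_1$, and consider the sequence $\{(\mathbf{L}_u^k,\mathbf{S}_u^k,\mathbf{Y}^k)\}_{k\ge0}$ generated from $\mathbf{S}_u^0=\mathbf{0}$, $\mathbf{Y}^0=\mathbf{0}$ by $$\mathbf{L}_u^{k+1}=\arg\min_{\mathbf{L}} f(\mathbf{L})+\tfrac{\mu_k}{2}\bigl\|\mathbf{L}-(\widehat{\mathbf{H}}_u-\mathbf{S}_u^k+\tfrac{1}{\mu_k}\mathbf{Y}^k)\bigr\|_F^2,$$ $$\mathbf{S}_u^{k+1}=\arg\min_{\mathbf{S}} g(\mathbf{S})+\tfrac{\mu_k}{2}\bigl\|\mathbf{S}-(\widehat{\mathbf{H}}_u-\mathbf{L}_u^{k+1}+\tfrac{1}{\mu_k}\mathbf{Y}^k)\bigr\|_F^2,$$ $$\mathbf{Y}^{k+1}=\mathbf{Y}^k+\mu_k(\widehat{\mathbf{H}}_u-\mathbf{L}_u^{k+1}-\mathbf{S}_u^{k+1}),\qquad \mu_{k+1}=\min\{\rho\mu_k,\mu_{\max}\}.$$ Then the sequence $\{\mathbf{Y}^k\}$ is 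bounded.
   Context: $\|\cdot\|_*$ is the nuclear norm, $\|\cdot\|_1$ the entrywise $\ell_1$-norm, $\|\cdot\|_F$ the Frobenius norm. These iterations are the ADMM scheme for $\min_{\mathbf{L},\mathbf{S}} f(\mathbf{L})+g(\mathbf{S})$ subject to $\mathbf{L}+\mathbf{S}=\widehat{\mathbf{H}}_u$. *)

theory Defs
  imports "Jordan_Normal_Form.Char_Poly"
begin

definition frob_norm :: "real mat \<Rightarrow> real" where
  "frob_norm A = sqrt (\<Sum>i<dim_row A. \<Sum>j<dim_col A. (A $$ (i,j))\<^sup>2)"

definition l1_norm :: "real mat \<Rightarrow> real" where
  "l1_norm A = (\<Sum>i<dim_row A. \<Sum>j<dim_col A. \<bar>A $$ (i,j)\<bar>)"

(* nuclear norm = sum of singular values, counted with multiplicity.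
   The singular values squared are the eigenvalues (roots of the characteristic
   polynomial, with multiplicity) of A^T A. *)
definition nuclear_norm :: "real mat \<Rightarrow> real" where
  "nuclear_norm A =
     (let p = char_poly (transpose_mat A * A) in
      \<Sum>x\<in>{x. poly p x = 0}. of_nat (order x p) * sqrt x)"

end

theory Submission
  imports Defs
begin

text \<open>Only the S-step matters. With \<open>T = H - L(k+1) + Y(k) / mu(k)\<close> the target of that step,
  \<open>Y(k+1) = mu(k) (T - S(k+1))\<close>. Testing the optimality of \<open>S(k+1)\<close> against the matrix that
  agrees with it except that one entry is moved onto \<open>T\<close> gives \<open>mu(k)/2 d\<^sup>2 \<le> lam |d|\<close> for the
  residual \<open>d\<close> of that entry, so every entry of \<open>Y(k+1)\<close> is bounded by \<open>2 lam\<close>, whatever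
  the penalties \<open>mu(k)\<close> and the L-step are.\<close>

lemma sum_sum_diff_single_entry:
  fixes p q :: "nat \<Rightarrow> nat \<Rightarrow> 'a::ab_group_add"
  assumes "i < n" "j < m"
    and "\<And>a b. a < n \<Longrightarrow> b < m \<Longrightarrow> (a, b) \<noteq> (i, j) \<Longrightarrow> p a b = q a b"
  shows "(\<Sum>a<n. \<Sum>b<m. p a b) - (\<Sum>a<n. \<Sum>b<m. q a b) = p i j - q i j"
proof -
  let ?I = "{..<n} \<times> {..<m}"
  have ij: "(i, j) \<in> ?I" using assms(1,2) by simp
  have rest: "(\<Sum>z\<in>?I - {(i, j)}. case_prod p z) = (\<Sum>z\<in>?I - {(i, j)}. case_prod q z)"
    by (rule sum.cong) (use assms(3) in auto)
  show ?thesis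
    unfolding sum.cartesian_product sum.remove[OF finite_cartesian_product[of "{..<n}" "{..<m}"] ij, simplified]
    using rest by simp
qed

lemma frob_norm_squared: "(frob_norm A)\<^sup>2 = (\<Sum>i<dim_row A. \<Sum>j<dim_col A. (A $$ (i, j))\<^sup>2)"
  unfolding frob_norm_def by (simp add: sum_nonneg)

lemma frob_norm_le_entrywise_bound:
  assumes "A \<in> carrier_mat n m" and "c \<ge> 0"
    and "\<And>i j. i < n \<Longrightarrow> j < m \<Longrightarrow> \<bar>A $$ (i, j)\<bar> \<le> c"
  shows "frob_norm A \<le> sqrt (real n * real m) * c"
proof -
  have "(\<Sum>i<n. \<Sum>j<m. (A $$ (i, j))\<^sup>2) \<le> (\<Sum>i<n. \<Sum>j<m. c\<^sup>2)"
    using assms(2,3) by (intro sum_mono) (metis abs_le_square_iff abs_of_nonneg lessThan_iff)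
  then have "frob_norm A \<le> sqrt (real n * real m * c\<^sup>2)"
    using assms(1) by (simp add: frob_norm_def mult.assoc)
  also have "\<dots> = sqrt (real n * real m) * c"
    using assms(2) by (simp add: real_sqrt_mult)
  finally show ?thesis .
qed

lemma mult_abs_le_of_half_sq_le:
  fixes mu lam d :: real
  assumes "mu / 2 * d\<^sup>2 \<le> lam * \<bar>d\<bar>" and "lam \<ge> 0"
  shows "mu * \<bar>d\<bar> \<le> 2 * lam"
proof (cases "d = 0")
  case False
  then have "(mu * \<bar>d\<bar>) * \<bar>d\<bar> \<le> (2 * lam) * \<bar>d\<bar>"
    using assms(1) by (simp add: power2_eq_square algebra_simps abs_mult_self_eq)
  then show ?thesis using False by simp
qed (use assms(2) in simp)

lemma l1_prox_residual_le:
  fixes S T :: "real mat"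
  assumes S: "S \<in> carrier_mat n m" and T: "T \<in> carrier_mat n m" and lam: "lam \<ge> 0"
    and opt: "\<And>X. X \<in> carrier_mat n m \<Longrightarrow> lam * l1_norm S + mu / 2 * (frob_norm (S - T))\<^sup>2
        \<le> lam * l1_norm X + mu / 2 * (frob_norm (X - T))\<^sup>2"
    and ij: "i < n" "j < m"
  shows "mu * \<bar>T $$ (i, j) - S $$ (i, j)\<bar> \<le> 2 * lam"
proof -
  define X where "X = mat n m (\<lambda>(a, b). if (a, b) = (i, j) then T $$ (i, j) else S $$ (a, b))"
  define d where "d = T $$ (i, j) - S $$ (i, j)"
  have X: "X \<in> carrier_mat n m" unfolding X_def by simp
  have l1: "l1_norm X - l1_norm S = \<bar>T $$ (i, j)\<bar> - \<bar>S $$ (i, j)\<bar>"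
    unfolding l1_norm_def carrier_matD[OF S] carrier_matD[OF X] using S ij
    by (subst sum_sum_diff_single_entry[OF ij]) (auto simp: X_def)
  have frob: "(frob_norm (X - T))\<^sup>2 - (frob_norm (S - T))\<^sup>2 = - d\<^sup>2"
    using S T X ij unfolding frob_norm_squared d_def
      carrier_matD[OF minus_carrier_mat[OF T, of X]] carrier_matD[OF minus_carrier_mat[OF T, of S]]
    by (subst sum_sum_diff_single_entry[OF ij]) (auto simp: X_def power2_commute)
  have "mu / 2 * d\<^sup>2 \<le> lam * (\<bar>T $$ (i, j)\<bar> - \<bar>S $$ (i, j)\<bar>)"
    using opt[OF X] unfolding diff_eq_eq[THEN iffD1, OF l1] diff_eq_eq[THEN iffD1, OF frob]
    by (simp add: algebra_simps)
  also have "\<dots> \<le> lam * \<bar>d\<bar>"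
    unfolding d_def using lam by (intro mult_left_mono) auto
  finally show ?thesis
    using mult_abs_le_of_half_sq_le lam by (simp add: d_def)
qed

theorem lemma1:
  fixes Ns Nb :: nat
    and H L1 :: "real mat"
    and lam gam beta mu0 rho mumax :: real
    and L S Y :: "nat \<Rightarrow> real mat"
    and mu :: "nat \<Rightarrow> real"
    and f g :: "real mat \<Rightarrow> real"
  assumes H: "H \<in> carrier_mat Ns Nb" and L1: "L1 \<in> carrier_mat Ns Nb"
    and lam: "lam > 0" and gam: "gam \<ge> 0" and mu0: "mu0 > 0" and rho: "rho > 1"
    and mumax: "mumax \<ge> mu0"
    and f_def: "\<And>X. f X = nuclear_norm X + gam * (frob_norm (X - beta \<cdot>\<^sub>m L1))\<^sup>2"
    and g_def: "\<And>X. g X = lam * l1_norm X"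
    and S0: "S 0 = 0\<^sub>m Ns Nb" and Y0: "Y 0 = 0\<^sub>m Ns Nb"
    and mu_0: "mu 0 = mu0"
    and mu_Suc: "\<And>k. mu (Suc k) = min (rho * mu k) mumax"
    and L_car: "\<And>k. L (Suc k) \<in> carrier_mat Ns Nb"
    and L_min: "\<And>k X. X \<in> carrier_mat Ns Nb \<Longrightarrow>
        f (L (Suc k)) + mu k / 2 * (frob_norm (L (Suc k) - (H - S k + (1 / mu k) \<cdot>\<^sub>m Y k)))\<^sup>2
        \<le> f X + mu k / 2 * (frob_norm (X - (H - S k + (1 / mu k) \<cdot>\<^sub>m Y k)))\<^sup>2"
    and S_car: "\<And>k. S (Suc k) \<in> carrier_mat Ns Nb"
    and S_min: "\<And>k X. X \<in> carrier_mat Ns Nb \<Longrightarrow>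
        g (S (Suc k)) + mu k / 2 * (frob_norm (S (Suc k) - (H - L (Suc k) + (1 / mu k) \<cdot>\<^sub>m Y k)))\<^sup>2
        \<le> g X + mu k / 2 * (frob_norm (X - (H - L (Suc k) + (1 / mu k) \<cdot>\<^sub>m Y k)))\<^sup>2"
    and Y_Suc: "\<And>k. Y (Suc k) = Y k + mu k \<cdot>\<^sub>m (H - L (Suc k) - S (Suc k))"
  shows "\<exists>B. \<forall>k. frob_norm (Y k) \<le> B"
proof -
  have mu_pos: "mu k > 0" for k
    by (induction k) (use mu0 rho mumax mu_0 mu_Suc in auto)
  have Y_car: "Y k \<in> carrier_mat Ns Nb" for k
  proof (cases k)
    case (Suc k')
    then show ?thesis using Y_Suc[of k'] S_car[of k'] by auto
  qed (use Y0 in simp)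
  have entry_bound: "\<bar>Y k $$ (i, j)\<bar> \<le> 2 * lam" if "i < Ns" "j < Nb" for k i j
  proof (cases k)
    case (Suc k')
    define T where "T = H - L k + (1 / mu k') \<cdot>\<^sub>m Y k'"
    have T: "T \<in> carrier_mat Ns Nb" unfolding T_def using H L_car Y_car Suc by auto
    have "mu k' * \<bar>T $$ (i, j) - S k $$ (i, j)\<bar> \<le> 2 * lam"
      using l1_prox_residual_le[OF S_car T] S_min g_def lam that by (auto simp: T_def Suc)
    moreover have "Y k $$ (i, j) = mu k' * (T $$ (i, j) - S k $$ (i, j))"
      using that H L_car[of k'] Y_car[of k'] S_car[of k'] mu_pos[of k'] by (simp add: Suc Y_Suc T_def field_simps)
    ultimately show ?thesis using mu_pos[of k'] by (simp add: abs_mult)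
  qed (use Y0 lam that in simp)
  then have "frob_norm (Y k) \<le> sqrt (real Ns * real Nb) * (2 * lam)" for k
    using frob_norm_le_entrywise_bound[OF Y_car] lam by simp
  then show ?thesis by blast
qed

end
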